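(* Let $W$ be a representation $\sigma\mapsto A_\sigma$ of a semigroup $\Sigma$ and let $\Gamma:W\times\mathbb{R}^p\to W$ be smooth with $\Gamma(A_\sigma X;\lambda)=A_\sigma\Gamma(X;\lambda)$ for all $\sigma\in\Sigma$, $X$, $\lambda$. Let $X_0\in W$, $\lambda_0\in\mathbb{R}^p$ with $\Gamma(X_0;\lambda_0)=0$ and $A_\sigma X_0=X_0$ for all $\sigma\in\Sigma$. Let $L_0=D_X\Gamma(X_0;\lambda_0)$ with semisimple part $L_0^S$. Then $\ker L_0^S$ and $\mathrm{im}\,L_0^S$ are subrepresentations, and the reduced map $r:\ker L_0^S\times\Lambda\to\ker L_0^S$ (constructed as in the context) is $\Sigma$-equivariant: $r(A_\sigma X_{\ker};\lambda)=A_\sigma r(X_{\ker};\lambda)$ for all $\sigma\in\Sigma$ and all $(X_{\ker},\lambda)$ sufficiently close to $((X_0)_{\ker},\lambda_0)$, where $A_\sigma$ denotes the restriction to $\ker L_0^S$.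
   Context: A representation of a semigroup $\Sigma$ in a finite-dimensional real vector space $W$ is a map $\sigma\mapsto A_\sigma\in\mathfrak{gl}(W)$ with $A_\sigma A_\tau=A_{\sigma\tau}$; a subrepresentation is a subspace invariant under all $A_\sigma$. For a linear $L_0$, $L_0=L_0^S+L_0^N$ is its decomposition into commuting semisimple and nilpotent parts; $W=\mathrm{im}\,L_0^S\oplus\ker L_0^S$ with projections $P_{\mathrm{im}},P_{\ker}$, and write $X=X_{\mathrm{im}}+X_{\ker}$. Set $\Gamma_{\mathrm{im}}=P_{\mathrm{im}}\circ\Gamma$, $\Gamma_{\ker}=P_{\ker}\circ\Gamma$. Since $D_{X_{\mathrm{im}}}\Gamma_{\mathrm{im}}(X_0;\lambda_0)$ is invertible on $\mathrm{im}\,L_0^S$, the implicit function theorem gives a smooth $X_{\mathrm{im}}(X_{\ker},\lambda)$, defined for $X_{\ker}$ near $(X_0)_{\ker}$ and $\lambda$ in a neighbourhood $\Lambda$ of $\lambda_0$, which is the unique solution near $(X_0)_{\mathrm{im}}$ of $\Gamma_{\mathrm{im}}(X_{\mathrm{im}}+X_{\ker};\lambda)=0$. The reduced map is $r(X_{\ker};\lambda)=\Gamma_{\ker}(X_{\mathrm{im}}(X_{\ker},\lambda)+X_{\ker};\lambda)$. *)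

theory Defs
  imports "HOL-Analysis.Analysis" "HOL-Computational_Algebra.Polynomial"
begin

definition representation :: "('s::semigroup_mult \<Rightarrow> 'w::real_vector \<Rightarrow> 'w) \<Rightarrow> bool" where
  "representation A \<longleftrightarrow> (\<forall>\<sigma>. linear (A \<sigma>)) \<and> (\<forall>\<sigma> \<tau>. A \<sigma> \<circ> A \<tau> = A (\<sigma> * \<tau>))"

definition subrep :: "('s \<Rightarrow> 'w::real_vector \<Rightarrow> 'w) \<Rightarrow> 'w set \<Rightarrow> bool" where
  "subrep A V \<longleftrightarrow> subspace V \<and> (\<forall>\<sigma>. \<forall>x\<in>V. A \<sigma> x \<in> V)"

fun iter_deriv :: "'a::real_normed_vector list \<Rightarrow> ('a \<Rightarrow> 'b::real_normed_vector) \<Rightarrow> 'a \<Rightarrow> 'b" where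
  "iter_deriv [] f = f"
| "iter_deriv (v # vs) f = (\<lambda>x. frechet_derivative (iter_deriv vs f) (at x) v)"

definition smooth :: "('a::real_normed_vector \<Rightarrow> 'b::real_normed_vector) \<Rightarrow> bool" where
  "smooth f \<longleftrightarrow> (\<forall>vs x. iter_deriv vs f differentiable (at x))"

definition poly_lin :: "real poly \<Rightarrow> ('w::real_vector \<Rightarrow> 'w) \<Rightarrow> 'w \<Rightarrow> 'w" where
  "poly_lin p T = (\<lambda>x. \<Sum>i\<le>degree p. coeff p i *\<^sub>R (T ^^ i) x)"

text \<open>Semisimple: annihilated by a nonzero separable polynomial (minimal polynomial separable).\<close>
definition semisimple_lin :: "('w::real_vector \<Rightarrow> 'w) \<Rightarrow> bool" where
  "semisimple_lin T \<longleftrightarrow> linear T \<and>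
     (\<exists>p. p \<noteq> 0 \<and> coprime p (pderiv p) \<and> (\<forall>x. poly_lin p T x = 0))"

definition nilpotent_lin :: "('w::real_vector \<Rightarrow> 'w) \<Rightarrow> bool" where
  "nilpotent_lin T \<longleftrightarrow> linear T \<and> (\<exists>k. \<forall>x. (T ^^ k) x = 0)"

definition is_semisimple_part :: "('w::real_vector \<Rightarrow> 'w) \<Rightarrow> ('w \<Rightarrow> 'w) \<Rightarrow> bool" where
  "is_semisimple_part S L \<longleftrightarrow> semisimple_lin S \<and> nilpotent_lin (\<lambda>x. L x - S x)
      \<and> S \<circ> L = L \<circ> S"

text \<open>Projections for W = im S (+) ker S.\<close>
definition ker_part :: "('w::real_vector \<Rightarrow> 'w) \<Rightarrow> 'w \<Rightarrow> 'w" where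
  "ker_part S x = (THE k. S k = 0 \<and> x - k \<in> range S)"

definition im_part :: "('w::real_vector \<Rightarrow> 'w) \<Rightarrow> 'w \<Rightarrow> 'w" where
  "im_part S x = x - ker_part S x"

end

theory Submission
  imports Defs
begin

text \<open>
  Differentiating \<open>\<Gamma> (A\<^sub>\<sigma> X) \<lambda>\<^sub>0 = A\<^sub>\<sigma> (\<Gamma> X \<lambda>\<^sub>0)\<close> at the fixed point \<open>X\<^sub>0\<close> shows that every
  \<open>A\<^sub>\<sigma>\<close> commutes with \<open>L\<^sub>0\<close>. If \<open>L\<^sub>0 = S + N\<close> with \<open>N\<^sup>K = 0\<close>, then
  \<open>ker S = ker L\<^sub>0\<^sup>K\<close> and \<open>im S = im L\<^sub>0\<^sup>K\<close>, so both are invariant under the \<open>A\<^sub>\<sigma>\<close>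
  and the projections of \<open>W = im S \<oplus> ker S\<close> commute with them. Hence \<open>A\<^sub>\<sigma> (X\<^sub>i\<^sub>m x \<lambda>)\<close>
  solves the im-equation at \<open>A\<^sub>\<sigma> x\<close>; near the base point it lies in the uniqueness
  neighbourhood by continuity, so it equals \<open>X\<^sub>i\<^sub>m (A\<^sub>\<sigma> x) \<lambda>\<close>, and equivariance of the
  reduced map follows. Smoothness of \<open>\<Gamma>\<close> and \<open>\<Gamma> X\<^sub>0 \<lambda>\<^sub>0 = 0\<close> are needed only to construct
  \<open>X\<^sub>i\<^sub>m\<close>, whose defining properties are assumed here.
\<close>

lemma linear_funpow:
  fixes f :: "'a::real_vector \<Rightarrow> 'a"
  shows "linear f \<Longrightarrow> linear (f ^^ n)"
  by (induction n) (simp_all add: linear_compose linear_id)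

lemma poly_lin_split_low_coeffs:
  fixes T :: "'w::real_vector \<Rightarrow> 'w"
  shows "poly_lin p T x = coeff p 0 *\<^sub>R x + coeff p 1 *\<^sub>R T x
     + (\<Sum>i\<le>degree p. coeff p (Suc (Suc i)) *\<^sub>R (T ^^ Suc (Suc i)) x)"
proof -
  have "poly_lin p T x = (\<Sum>i\<le>Suc (Suc (degree p)). coeff p i *\<^sub>R (T ^^ i) x)"
    unfolding poly_lin_def by (rule sum.mono_neutral_left) (auto simp: coeff_eq_0)
  also have "\<dots> = coeff p 0 *\<^sub>R x + coeff p 1 *\<^sub>R T x
     + (\<Sum>i\<le>degree p. coeff p (Suc (Suc i)) *\<^sub>R (T ^^ Suc (Suc i)) x)"
    by (simp only: sum.atMost_Suc_shift) (simp add: add.assoc del: sum.atMost_Suc)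
  finally show ?thesis .
qed

lemma coprime_pderiv_coeff_nonzero:
  fixes p :: "real poly"
  assumes "coprime p (pderiv p)"
  shows "coeff p 0 \<noteq> 0 \<or> coeff p 1 \<noteq> 0"
proof (rule ccontr)
  assume "\<not> ?thesis"
  then have "poly p 0 = 0" "poly (pderiv p) 0 = 0"
    by (auto simp: poly_0_coeff_0 coeff_pderiv)
  then have "[:0, 1:] dvd p" "[:0, 1:] dvd pderiv p"
    using poly_eq_0_iff_dvd[of p 0] poly_eq_0_iff_dvd[of "pderiv p" 0] by simp_all
  with assms have "is_unit [:0, 1::real:]"
    using coprime_common_divisor by blast
  then show False by (simp add: is_unit_iff_degree)
qed

lemma semisimple_lin_linear: "semisimple_lin S \<Longrightarrow> linear S"
  by (simp add: semisimple_lin_def)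

lemma semisimple_lin_kernel_square:
  fixes S :: "'a::real_vector \<Rightarrow> 'a"
  assumes ss: "semisimple_lin S" and "S (S x) = 0"
  shows "S x = 0"
proof -
  obtain p where p: "coprime p (pderiv p)" "\<And>x. poly_lin p S x = 0"
    using ss unfolding semisimple_lin_def by blast
  have S0: "S 0 = 0"
    using linear_0 semisimple_lin_linear[OF ss] by blast
  have tail_vanish: "(\<Sum>i\<le>degree p. coeff p (Suc (Suc i)) *\<^sub>R (S ^^ Suc (Suc i)) y) = 0"
    if "S (S y) = 0" for y
  proof -
    have "(S ^^ Suc (Suc i)) y = 0" for i
      using that S0 by (induction i) (simp_all del: funpow.simps add: funpow_Suc_right)
    then show ?thesis by simp
  qed
  have "S (S (S x)) = 0"
    using assms(2) S0 by simp
  then have "coeff p 0 *\<^sub>R x + coeff p 1 *\<^sub>R S x = 0" "coeff p 0 *\<^sub>R S x = 0"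
    using p(2)[of x] p(2)[of "S x"] assms(2)
    by (simp_all only: poly_lin_split_low_coeffs tail_vanish) simp_all
  then show ?thesis
    using coprime_pderiv_coeff_nonzero[OF p(1)] by (cases "coeff p 0 = 0") simp_all
qed

lemma semisimple_lin_range_square:
  fixes S :: "'a::real_vector \<Rightarrow> 'a"
  assumes ss: "semisimple_lin S"
  shows "\<exists>w. S x = S (S w)"
proof -
  obtain p where p: "coprime p (pderiv p)" "poly_lin p S x = 0"
    using ss unfolding semisimple_lin_def by blast
  have lin: "linear S"
    using semisimple_lin_linear[OF ss] .
  define R where "R = (\<Sum>i\<le>degree p. coeff p (Suc (Suc i)) *\<^sub>R (S ^^ i) x)"
  have "(\<Sum>i\<le>degree p. coeff p (Suc (Suc i)) *\<^sub>R (S ^^ Suc (Suc i)) x) = S (S R)"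
    unfolding R_def by (simp add: linear_sum[OF lin] linear_scale[OF lin])
  then have rel: "coeff p 0 *\<^sub>R x + coeff p 1 *\<^sub>R S x + S (S R) = 0"
    using p(2) by (simp only: poly_lin_split_low_coeffs)
  show ?thesis
  proof (cases "coeff p 0 = 0")
    case True
    with coprime_pderiv_coeff_nonzero[OF p(1)] have "coeff p 1 \<noteq> 0" by simp
    then have "S x = (1 / coeff p 1) *\<^sub>R (coeff p 1 *\<^sub>R S x)"
      by simp
    also have "coeff p 1 *\<^sub>R S x = S (S (- R))"
      using rel True by (simp add: linear_neg[OF lin] eq_neg_iff_add_eq_0 add.commute)
    finally have "S x = S (S ((1 / coeff p 1) *\<^sub>R - R))"
      by (simp only: linear_scale[OF lin])
    then show ?thesis ..
  next
    case False
    have "coeff p 0 *\<^sub>R x = - (coeff p 1 *\<^sub>R S x + S (S R))"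
      using rel by (simp only: add.assoc eq_neg_iff_add_eq_0)
    also have "\<dots> = S (- (coeff p 1 *\<^sub>R x + S R))"
      by (simp only: linear_neg[OF lin] linear_add[OF lin] linear_scale[OF lin])
    finally have "coeff p 0 *\<^sub>R x = S (- (coeff p 1 *\<^sub>R x + S R))" .
    then have "x = (1 / coeff p 0) *\<^sub>R S (- (coeff p 1 *\<^sub>R x + S R))"
      using False by (metis scaleR_one scaleR_scaleR nonzero_divide_eq_eq)
    then have "x = S ((1 / coeff p 0) *\<^sub>R - (coeff p 1 *\<^sub>R x + S R))"
      by (simp only: linear_scale[OF lin])
    then have "S x = S (S ((1 / coeff p 0) *\<^sub>R - (coeff p 1 *\<^sub>R x + S R)))"
      by (rule arg_cong)
    then show ?thesis ..
  qed
qed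

lemma semisimple_lin_kernel_inter_range:
  fixes S :: "'a::real_vector \<Rightarrow> 'a"
  assumes "semisimple_lin S" "S y = 0" "y \<in> range S"
  shows "y = 0"
  using assms semisimple_lin_kernel_square[OF assms(1)] by auto

lemma semisimple_lin_kernel_power:
  fixes S :: "'a::real_vector \<Rightarrow> 'a"
  assumes ss: "semisimple_lin S" and "(S ^^ j) z = 0"
  shows "S z = 0"
  using assms(2)
proof (induction j arbitrary: z)
  case 0
  then show ?case using linear_0[OF semisimple_lin_linear[OF ss]] by simp
next
  case (Suc j)
  then have "S (S z) = 0" by (simp add: funpow_Suc_right del: funpow.simps)
  then show ?case using semisimple_lin_kernel_square[OF ss] by blast
qed

lemma ker_part:
  fixes S :: "'a::real_vector \<Rightarrow> 'a"
  assumes ss: "semisimple_lin S"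
  shows "S (ker_part S x) = 0" "x - ker_part S x \<in> range S"
    and ker_part_unique: "S k = 0 \<Longrightarrow> x - k \<in> range S \<Longrightarrow> ker_part S x = k"
proof -
  have lin: "linear S"
    using semisimple_lin_linear[OF ss] .
  have uniq: "k1 = k2"
    if k: "S k1 = 0" "x - k1 \<in> range S" "S k2 = 0" "x - k2 \<in> range S" for k1 k2
  proof -
    obtain a b where "x - k1 = S a" "x - k2 = S b"
      using k by blast
    then have "k1 - k2 = S (b - a)"
      by (simp add: linear_diff[OF lin] algebra_simps)
    moreover have "S (k1 - k2) = 0"
      using k by (simp add: linear_diff[OF lin])
    ultimately show "k1 = k2"
      using semisimple_lin_kernel_inter_range[OF ss] by fastforce
  qed
  obtain w where "S x = S (S w)"
    using semisimple_lin_range_square[OF ss] by blast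
  then have "S (x - S w) = 0 \<and> x - (x - S w) \<in> range S"
    by (simp add: linear_diff[OF lin])
  then have "\<exists>!k. S k = 0 \<and> x - k \<in> range S"
    using uniq by blast
  then have kp: "S (ker_part S x) = 0 \<and> x - ker_part S x \<in> range S"
    unfolding ker_part_def by (rule theI')
  then show "S (ker_part S x) = 0" "x - ker_part S x \<in> range S"
    by simp_all
  show "S k = 0 \<Longrightarrow> x - k \<in> range S \<Longrightarrow> ker_part S x = k"
    using kp uniq by blast
qed

lemma semisimple_part:
  fixes S L :: "'a::real_vector \<Rightarrow> 'a"
  assumes "is_semisimple_part S L"
  shows semisimple_part_semisimple: "semisimple_lin S"
    and semisimple_part_linear: "linear S" "linear L"
    and semisimple_part_commute: "S (L x) = L (S x)"
    and semisimple_part_nilpotent: "\<exists>K. \<forall>x. ((\<lambda>x. L x - S x) ^^ K) x = 0"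
proof -
  show "linear S"
    using assms by (simp add: is_semisimple_part_def semisimple_lin_def)
  moreover have "linear (\<lambda>x. L x - S x)"
    using assms by (simp add: is_semisimple_part_def nilpotent_lin_def)
  ultimately show "linear L"
    using linear_compose_add by fastforce
  show "semisimple_lin S" "S (L x) = L (S x)" "\<exists>K. \<forall>x. ((\<lambda>x. L x - S x) ^^ K) x = 0"
    using assms by (auto simp: is_semisimple_part_def nilpotent_lin_def fun_eq_iff)
qed

lemma funpow_eq_nilpotent_on_semisimple_kernel:
  fixes S L :: "'a::real_vector \<Rightarrow> 'a"
  assumes SL: "is_semisimple_part S L" and "S x = 0"
  shows "(L ^^ j) x = ((\<lambda>x. L x - S x) ^^ j) x"
  using assms(2)
proof (induction j arbitrary: x)
  case 0
  then show ?case by simp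
next
  case (Suc j)
  have "S (L x - S x) = 0"
    using Suc.prems semisimple_part_commute[OF SL, of x]
      linear_0[OF semisimple_part_linear(2)[OF SL]] linear_diff[OF semisimple_part_linear(1)[OF SL]]
    by simp
  with Suc.IH Suc.prems show ?case
    by (simp add: funpow_Suc_right del: funpow.simps)
qed

lemma funpow_semisimple_eq_nilpotent_on_kernel:
  fixes S L :: "'a::real_vector \<Rightarrow> 'a"
  assumes SL: "is_semisimple_part S L" and "L z = 0"
  shows "(S ^^ j) z = (-1) ^ j *\<^sub>R ((\<lambda>x. L x - S x) ^^ j) z"
  using assms(2)
proof (induction j arbitrary: z)
  case 0
  then show ?case by simp
next
  case (Suc j)
  define N where "N = (\<lambda>x. L x - S x)"
  note linS = semisimple_part_linear(1)[OF SL]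
  have Nz: "N z = - S z"
    using Suc.prems unfolding N_def by simp
  have "L (N z) = - S (L z)"
    unfolding Nz semisimple_part_commute[OF SL] using linear_neg[OF semisimple_part_linear(2)[OF SL]] by simp
  then have "L (N z) = 0"
    using Suc.prems linear_0[OF linS] by simp
  then have IH: "(S ^^ j) (N z) = (-1) ^ j *\<^sub>R (N ^^ j) (N z)"
    using Suc.IH unfolding N_def by blast
  have "(S ^^ Suc j) z = (S ^^ j) (- N z)"
    using Nz by (simp add: funpow_Suc_right del: funpow.simps)
  also have "\<dots> = - (S ^^ j) (N z)"
    using linear_neg[OF linear_funpow[OF linS]] .
  also have "\<dots> = (-1) ^ Suc j *\<^sub>R (N ^^ Suc j) z"
    using IH by (simp add: funpow_Suc_right del: funpow.simps)
  finally show ?case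
    unfolding N_def .
qed

lemma semisimple_part_kernel_of_kernel:
  fixes S L :: "'a::real_vector \<Rightarrow> 'a"
  assumes SL: "is_semisimple_part S L" and "L z = 0"
  shows "S z = 0"
proof -
  obtain K where "\<And>x. ((\<lambda>x. L x - S x) ^^ K) x = 0"
    using semisimple_part_nilpotent[OF SL] by blast
  then have "(S ^^ K) z = 0"
    using funpow_semisimple_eq_nilpotent_on_kernel[OF SL assms(2), of K] by simp
  then show ?thesis
    using semisimple_lin_kernel_power[OF semisimple_part_semisimple[OF SL]] by blast
qed

lemma semisimple_part_kernel_of_funpow:
  fixes S L :: "'a::real_vector \<Rightarrow> 'a"
  assumes SL: "is_semisimple_part S L" and "(L ^^ m) x = 0"
  shows "S x = 0"
  using assms(2)
proof (induction m arbitrary: x)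
  case 0
  then show ?case
    using linear_0[OF semisimple_part_linear(1)[OF SL]] by simp
next
  case (Suc m)
  then have "S (L x) = 0"
    by (simp add: funpow_Suc_right del: funpow.simps)
  then have "S (S x) = 0"
    using semisimple_part_kernel_of_kernel[OF SL] semisimple_part_commute[OF SL] by metis
  then show ?case
    using semisimple_lin_kernel_square[OF semisimple_part_semisimple[OF SL]] by blast
qed

lemma semisimple_part_kernel_eq:
  fixes S L :: "'a::real_vector \<Rightarrow> 'a"
  assumes SL: "is_semisimple_part S L" and nil: "\<And>x. ((\<lambda>x. L x - S x) ^^ K) x = 0"
  shows "S x = 0 \<longleftrightarrow> (L ^^ K) x = 0"
  using funpow_eq_nilpotent_on_semisimple_kernel[OF SL, of x K] nil
    semisimple_part_kernel_of_funpow[OF SL] by metis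

lemma linear_image_eq_of_inj_on_subspace:
  fixes f :: "'a::euclidean_space \<Rightarrow> 'a"
  assumes f: "linear f" and R: "subspace R" "f ` R \<subseteq> R" and inj: "inj_on f R"
  shows "f ` R = R"
proof -
  have "dim (f ` R) = dim R"
    using dim_image_eq[OF f, of R] inj span_eq_iff[of R] R(1) by metis
  then show ?thesis
    using subspace_dim_equal[OF linear_subspace_image[OF f R(1)] R] by simp
qed

lemma funpow_image_eq:
  assumes "f ` R = R"
  shows "(f ^^ n) ` R = R"
proof (induction n)
  case (Suc n)
  then show ?case
    by (metis funpow_Suc_right image_comp assms)
qed simp

lemma semisimple_part_range_eq:
  fixes S L :: "'a::euclidean_space \<Rightarrow> 'a"
  assumes SL: "is_semisimple_part S L" and nil: "\<And>x. ((\<lambda>x. L x - S x) ^^ K) x = 0"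
  shows "range S = range (L ^^ K)"
proof -
  note ss = semisimple_part_semisimple[OF SL]
  note linS = semisimple_part_linear(1)[OF SL] and linL = semisimple_part_linear(2)[OF SL]
  have R: "subspace (range S)"
    using linear_subspace_image[OF linS subspace_UNIV] .
  have LR: "L ` range S \<subseteq> range S"
    by (auto simp flip: semisimple_part_commute[OF SL])
  \<comment> \<open>\<open>L\<close> is injective on \<open>im S\<close> since \<open>ker L \<subseteq> ker S\<close>, hence onto \<open>im S\<close> by dimension;
    and \<open>L\<^sup>K\<close> kills \<open>ker S\<close>.\<close>
  have "inj_on L (range S)"
  proof (rule inj_onI)
    fix a c assume ac: "a \<in> range S" "c \<in> range S" "L a = L c"
    then have "a - c \<in> range S"
      using R subspace_diff by blast
    moreover have "S (a - c) = 0"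
      using ac(3) semisimple_part_kernel_of_kernel[OF SL] by (simp add: linear_diff[OF linL])
    ultimately show "a = c"
      using semisimple_lin_kernel_inter_range[OF ss] by fastforce
  qed
  then have "(L ^^ K) ` range S = range S"
    using funpow_image_eq linear_image_eq_of_inj_on_subspace[OF linL R LR] by blast
  moreover have "(L ^^ K) x \<in> (L ^^ K) ` range S" for x
  proof -
    have "(L ^^ K) (ker_part S x) = 0"
      using semisimple_part_kernel_eq[OF SL nil] ker_part(1)[OF ss] by blast
    then have "(L ^^ K) x = (L ^^ K) (x - ker_part S x)"
      by (simp add: linear_diff[OF linear_funpow[OF linL]])
    then show ?thesis
      using ker_part(2)[OF ss] by blast
  qed
  ultimately show ?thesis
    by blast
qed

lemma has_derivative_commute_of_equivariant:
  fixes f :: "'a::real_normed_vector \<Rightarrow> 'a"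
  assumes f: "(f has_derivative L) (at x0)" and B: "bounded_linear B"
    and equiv: "\<And>x. f (B x) = B (f x)" and fixed: "B x0 = x0"
  shows "B (L x) = L (B x)"
proof -
  have "((\<lambda>x. f (B x)) has_derivative (\<lambda>x. L (B x))) (at x0)"
    using has_derivative_compose[OF bounded_linear_imp_has_derivative[OF B]] f fixed by metis
  then have "((\<lambda>x. B (f x)) has_derivative (\<lambda>x. L (B x))) (at x0)"
    by (simp only: equiv)
  moreover have "((\<lambda>x. B (f x)) has_derivative (\<lambda>x. B (L x))) (at x0)"
    using bounded_linear.has_derivative[OF B f] .
  ultimately show ?thesis
    using has_derivative_unique by metis
qed

lemma funpow_commute_apply:
  assumes "\<And>x. g (f x) = f (g x)"
  shows "g ((f ^^ n) x) = (f ^^ n) (g x)"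
  by (induction n) (simp_all add: assms)

lemma subrep_kernel_range_of_commute:
  fixes A :: "'s::semigroup_mult \<Rightarrow> 'w::real_vector \<Rightarrow> 'w"
  assumes A: "representation A" and T: "linear T"
    and comm: "\<And>\<sigma> x. A \<sigma> (T x) = T (A \<sigma> x)"
  shows "subrep A {x. T x = 0}" "subrep A (range T)"
proof -
  have linA: "linear (A \<sigma>)" for \<sigma>
    using A by (simp add: representation_def)
  show "subrep A {x. T x = 0}"
    unfolding subrep_def
    using linear_subspace_kernel[OF T] linear_0[OF linA] by (auto simp flip: comm)
  show "subrep A (range T)"
    unfolding subrep_def
    using linear_subspace_image[OF T subspace_UNIV] by (auto simp: comm)
qed

lemma ker_part_commute:
  fixes S B :: "'a::real_vector \<Rightarrow> 'a"
  assumes ss: "semisimple_lin S" and B: "linear B"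
    and ker: "\<And>x. S x = 0 \<Longrightarrow> S (B x) = 0" and ran: "\<And>x. B (S x) \<in> range S"
  shows "ker_part S (B x) = B (ker_part S x)"
proof (rule ker_part_unique[OF ss])
  show "S (B (ker_part S x)) = 0"
    using ker ker_part(1)[OF ss] by blast
  obtain w where "x - ker_part S x = S w"
    using ker_part(2)[OF ss] by blast
  then have "B x - B (ker_part S x) = B (S w)"
    by (metis linear_diff[OF B])
  then show "B x - B (ker_part S x) \<in> range S"
    using ran by simp
qed

lemma im_part_commute:
  fixes S B :: "'a::real_vector \<Rightarrow> 'a"
  assumes "semisimple_lin S" "linear B"
    and "\<And>x. S x = 0 \<Longrightarrow> S (B x) = 0" "\<And>x. B (S x) \<in> range S"
  shows "im_part S (B x) = B (im_part S x)"
  by (simp add: im_part_def ker_part_commute[OF assms] linear_diff[OF assms(2)])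

locale im_equation_solution =
  fixes S :: "'w::real_normed_vector \<Rightarrow> 'w"
    and \<Gamma> :: "'w \<Rightarrow> 'l::topological_space \<Rightarrow> 'w"
    and X0 :: 'w and lam0 :: 'l and U :: "('w \<times> 'l) set" and V :: "'w set"
    and Xim :: "'w \<Rightarrow> 'l \<Rightarrow> 'w"
  assumes semisimple: "semisimple_lin S"
    and U: "open U" "(ker_part S X0, lam0) \<in> U"
    and V: "open V" "im_part S X0 \<in> V"
    and Xim_cont: "continuous_on (U \<inter> ({x. S x = 0} \<times> UNIV)) (\<lambda>(x, lam). Xim x lam)"
    and Xim_base: "Xim (ker_part S X0) lam0 = im_part S X0"
    and Xim_sol: "\<And>x lam. (x, lam) \<in> U \<Longrightarrow> S x = 0 \<Longrightarrow>
        Xim x lam \<in> range S \<inter> V \<and> im_part S (\<Gamma> (Xim x lam + x) lam) = 0"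
    and Xim_uniq: "\<And>x lam y. (x, lam) \<in> U \<Longrightarrow> S x = 0 \<Longrightarrow> y \<in> range S \<inter> V \<Longrightarrow>
        im_part S (\<Gamma> (y + x) lam) = 0 \<Longrightarrow> y = Xim x lam"
begin

context
  fixes B :: "'w \<Rightarrow> 'w"
  assumes B: "bounded_linear B"
    and ker: "\<And>x. S x = 0 \<Longrightarrow> S (B x) = 0" and ran: "\<And>x. B (S x) \<in> range S"
    and equiv: "\<And>X lam. \<Gamma> (B X) lam = B (\<Gamma> X lam)"
    and fixed: "B X0 = X0"
begin

lemma solution_commute:
  obtains N where "open N" "(ker_part S X0, lam0) \<in> N"
    "\<And>x lam. (x, lam) \<in> N \<Longrightarrow> S x = 0 \<Longrightarrow> Xim (B x) lam = B (Xim x lam)"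
proof -
  note linB = bounded_linear.linear[OF B]
  define D where "D = U \<inter> ({x. S x = 0} \<times> UNIV)"
  have "continuous_on D (\<lambda>(x, lam). B (Xim x lam))"
    using continuous_on_compose2[OF linear_continuous_on[OF B] Xim_cont[folded D_def] subset_UNIV]
    by (simp add: case_prod_beta)
  then obtain T where T: "open T" "T \<inter> D = (\<lambda>(x, lam). B (Xim x lam)) -` V \<inter> D"
    using continuous_on_open_invariant[THEN iffD1, rule_format, OF _ V(1)] by blast
  define G where "G = (\<lambda>(x, lam). (B x, lam)) -` U"
  have "open G"
    unfolding G_def case_prod_beta
    by (intro open_vimage U(1) continuous_intros bounded_linear.continuous_on[OF B])
  show thesis
  proof
    show "open (U \<inter> T \<inter> G)"
      using U(1) T(1) \<open>open G\<close> by blast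
    have kp: "B (ker_part S X0) = ker_part S X0" and ip: "B (im_part S X0) = im_part S X0"
      using ker_part_commute[OF semisimple linB ker ran, of X0] im_part_commute[OF semisimple linB ker ran, of X0]
      by (simp_all add: fixed)
    have "(ker_part S X0, lam0) \<in> D"
      unfolding D_def using U(2) ker_part(1)[OF semisimple] by blast
    moreover have "B (Xim (ker_part S X0) lam0) \<in> V"
      using Xim_base ip V(2) by simp
    ultimately have "(ker_part S X0, lam0) \<in> T \<inter> D"
      unfolding T(2) by simp
    moreover have "(ker_part S X0, lam0) \<in> G"
      unfolding G_def using kp U(2) by simp
    ultimately show "(ker_part S X0, lam0) \<in> U \<inter> T \<inter> G"
      using U(2) by blast
  next
    fix x lam assume N: "(x, lam) \<in> U \<inter> T \<inter> G" and x: "S x = 0"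
    \<comment> \<open>\<open>B (Xim x lam)\<close> solves the equation at \<open>B x\<close> and, by the choice of \<open>T\<close>, lies in \<open>V\<close>.\<close>
    then have "(x, lam) \<in> T \<inter> D"
      unfolding D_def by simp
    then have "B (Xim x lam) \<in> V"
      unfolding T(2) by simp
    moreover have "B (Xim x lam) \<in> range S" "im_part S (\<Gamma> (Xim x lam + x) lam) = 0"
      using Xim_sol[of x lam] N x ran by auto
    moreover have "\<Gamma> (B (Xim x lam) + B x) lam = B (\<Gamma> (Xim x lam + x) lam)"
      by (simp flip: equiv add: linear_add[OF linB])
    ultimately have "im_part S (\<Gamma> (B (Xim x lam) + B x) lam) = 0"
      by (simp add: im_part_commute[OF semisimple linB ker ran] linear_0[OF linB])
    moreover have "(B x, lam) \<in> U"
      using N unfolding G_def by simp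
    ultimately show "Xim (B x) lam = B (Xim x lam)"
      using Xim_uniq ker[OF x] \<open>B (Xim x lam) \<in> V\<close> \<open>B (Xim x lam) \<in> range S\<close> by simp
  qed
qed

lemma reduced_map_commute:
  obtains N where "open N" "(ker_part S X0, lam0) \<in> N"
    "\<And>x lam. (x, lam) \<in> N \<Longrightarrow> S x = 0 \<Longrightarrow>
      ker_part S (\<Gamma> (Xim (B x) lam + B x) lam) = B (ker_part S (\<Gamma> (Xim x lam + x) lam))"
proof -
  obtain N where N: "open N" "(ker_part S X0, lam0) \<in> N"
    "\<And>x lam. (x, lam) \<in> N \<Longrightarrow> S x = 0 \<Longrightarrow> Xim (B x) lam = B (Xim x lam)"
    using solution_commute by blast
  have "ker_part S (\<Gamma> (Xim (B x) lam + B x) lam) = B (ker_part S (\<Gamma> (Xim x lam + x) lam))"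
    if "(x, lam) \<in> N" "S x = 0" for x lam
    using N(3)[OF that] ker_part_commute[OF semisimple bounded_linear.linear[OF B] ker ran]
    by (simp flip: linear_add[OF bounded_linear.linear[OF B]] add: equiv)
  with N(1,2) show thesis
    using that by blast
qed

end

end

theorem mainTheorem11:
  fixes A :: "'s::semigroup_mult \<Rightarrow> 'w::euclidean_space \<Rightarrow> 'w"
    and \<Gamma> :: "'w \<Rightarrow> real^'p \<Rightarrow> 'w"
    and X0 :: 'w and lam0 :: "real^'p"
    and L0 S :: "'w \<Rightarrow> 'w"
    and Xim :: "'w \<Rightarrow> real^'p \<Rightarrow> 'w"
    and U :: "('w \<times> (real^'p)) set" and V :: "'w set"
  assumes rep: "representation A"
    and smooth: "smooth (\<lambda>(X, lam). \<Gamma> X lam)"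
    and equiv: "\<And>\<sigma> X lam. \<Gamma> (A \<sigma> X) lam = A \<sigma> (\<Gamma> X lam)"
    and zero: "\<Gamma> X0 lam0 = 0"
    and fixed: "\<And>\<sigma>. A \<sigma> X0 = X0"
    and L0: "((\<lambda>X. \<Gamma> X lam0) has_derivative L0) (at X0)"
    and S: "is_semisimple_part S L0"
    \<comment> \<open>Xim is the implicit-function-theorem solution of the im-equation\<close>
    and U: "open U" "(ker_part S X0, lam0) \<in> U"
    and V: "open V" "im_part S X0 \<in> V"
    and Xim_cont: "continuous_on (U \<inter> ({x. S x = 0} \<times> UNIV)) (\<lambda>(x, lam). Xim x lam)"
    and Xim_base: "Xim (ker_part S X0) lam0 = im_part S X0"
    and Xim_sol: "\<And>x lam. (x, lam) \<in> U \<Longrightarrow> S x = 0 \<Longrightarrow>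
        Xim x lam \<in> range S \<inter> V \<and> im_part S (\<Gamma> (Xim x lam + x) lam) = 0"
    and Xim_uniq: "\<And>x lam y. (x, lam) \<in> U \<Longrightarrow> S x = 0 \<Longrightarrow> y \<in> range S \<inter> V \<Longrightarrow>
        im_part S (\<Gamma> (y + x) lam) = 0 \<Longrightarrow> y = Xim x lam"
  shows "subrep A {x. S x = 0} \<and> subrep A (range S) \<and>
    (\<forall>\<sigma>. \<exists>N. open N \<and> (ker_part S X0, lam0) \<in> N \<and>
       (\<forall>x lam. (x, lam) \<in> N \<and> S x = 0 \<longrightarrow>
          ker_part S (\<Gamma> (Xim (A \<sigma> x) lam + A \<sigma> x) lam)
            = A \<sigma> (ker_part S (\<Gamma> (Xim x lam + x) lam))))"
proof -
  have blA: "bounded_linear (A \<sigma>)" for \<sigma>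
    using rep linear_conv_bounded_linear by (auto simp: representation_def)
  have comm: "A \<sigma> (L0 x) = L0 (A \<sigma> x)" for \<sigma> x
    by (rule has_derivative_commute_of_equivariant[OF L0 blA]) (simp_all add: equiv fixed)
  obtain K where nil: "\<And>x. ((\<lambda>x. L0 x - S x) ^^ K) x = 0"
    using semisimple_part_nilpotent[OF S] by blast
  have "{x. S x = 0} = {x. (L0 ^^ K) x = 0}" "range S = range (L0 ^^ K)"
    using semisimple_part_kernel_eq[OF S nil] semisimple_part_range_eq[OF S nil] by auto
  then have sub: "subrep A {x. S x = 0}" "subrep A (range S)"
    using subrep_kernel_range_of_commute[OF rep linear_funpow[OF semisimple_part_linear(2)[OF S]]]
      funpow_commute_apply[of "A _" L0, OF comm] by simp_all
  then have ker: "S x = 0 \<Longrightarrow> S (A \<sigma> x) = 0" and ran: "A \<sigma> (S x) \<in> range S" for \<sigma> x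
    unfolding subrep_def by auto
  interpret im_equation_solution S \<Gamma> X0 lam0 U V Xim
    using semisimple_part_semisimple[OF S] U V Xim_cont Xim_base Xim_sol Xim_uniq by unfold_locales
  show ?thesis
    using sub reduced_map_commute[OF blA ker ran equiv fixed] by metis
qed

end
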